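(* Let $n \geq 2$ and $d$ be integers with $0 < d < n$, and write $n = n^1 \cdot d + n^0$ with $n^1, n^0 \in \mathbb{Z}$ and $0 \leq n^0 < d$. Let $a \in \mathbb{Z}_n$ and let $\langle a\rangle_0, \langle a\rangle_1 \in \mathbb{Z}_n$ satisfy $\langle a\rangle_0 + \langle a\rangle_1 = a$ in $\mathbb{Z}_n$. Let $a_u, a_0, a_1 \in \{0,1,\ldots,n-1\}$ be the unsigned representatives of $a, \langle a\rangle_0, \langle a\rangle_1$ respectively, and write $a_0 = a_0^1 \cdot d + a_0^0$ and $a_1 = a_1^1 \cdot d + a_1^0$ with $a_0^1,a_0^0,a_1^1,a_1^0 \in \mathbb{Z}$ and $0 \le a_0^0, a_1^0 < d$. Let $n' = \lceil n/2 \rceil$. Define integers $$\mathsf{corr} = \begin{cases} -1 & \text{if } (a_u \ge n') \wedge (a_0 < n') \wedge (a_1 < n'),\\ 1 & \text{if } (a_u < n') \wedge (a_0 \ge n') \wedge (a_1 \ge n'),\\ 0 & \text{otherwise,}\end{cases}$$ $$A = a_0^0 + a_1^0 - \big(\mathbf{1}\{a_0 \ge n'\} + \mathbf{1}\{a_1 \ge n'\} - \mathsf{corr}\big)\cdot n^0,$$ $$B = \mathsf{idiv}\big(a_0^0 - \mathbf{1}\{a_0 \ge n'\}\cdot n^0,\ d\big) + \mathsf{idiv}\big(a_1^0 - \mathbf{1}\{a_1 \ge n'\}\cdot n^0,\ d\big),$$ $$C = \mathbf{1}\{A < d\} + \mathbf{1}\{A < 0\} + \mathbf{1}\{A < -d\}.$$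 Then $$\mathsf{rdiv}(\langle a\rangle_0, d) + \mathsf{rdiv}(\langle a\rangle_1, d) + \big(\mathsf{corr}\cdot n^1 + 1 - C - B\big) \equiv \mathsf{rdiv}(a, d) \pmod n.$$
   Context: $\mathbf{1}\{P\}$ denotes the indicator that is $1$ if $P$ is true and $0$ otherwise. $\mathsf{idiv}:\mathbb{Z}\times\mathbb{Z}\to\mathbb{Z}$ is signed integer division in which the quotient is rounded towards $-\infty$ (so for $d>0$, $\mathsf{idiv}(x,d) = \lfloor x/d \rfloor$). For $x \in \mathbb{Z}_n$ with unsigned representative $x_u \in \{0,\ldots,n-1\}$ and an integer $0<d<n$, $\mathsf{rdiv}(x,d) \in \mathbb{Z}_n$ is defined as $\mathsf{idiv}\big(x_u - \mathbf{1}\{x_u \ge \lceil n/2\rceil\}\cdot n,\ d\big) \bmod n$, i.e. division of the signed value of $x$ by $d$, reduced mod $n$. The sum in the conclusion is taken in $\mathbb{Z}_n$ (integers reduced modulo $n$). *)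

theory Defs
  imports Main
begin

text \<open>Elements of Z_n are represented by integers; the unsigned representative of x is x mod n
(in {0..n-1} for n > 0). Signed division is int div (rounds toward minus infinity).\<close>

definition ind :: "bool \<Rightarrow> int" where
  "ind P = (if P then 1 else 0)"

text \<open>rdiv n x d: division of the signed value of x (in Z_n) by d, reduced mod n.
 ceil(n/2) = (n+1) div 2 for integer n.\<close>
definition rdiv :: "int \<Rightarrow> int \<Rightarrow> int \<Rightarrow> int" where
  "rdiv n x d = ((x mod n - ind (x mod n \<ge> (n + 1) div 2) * n) div d) mod n"

end

theory Submission
  imports Defs
begin

text \<open>Let s(x) be the signed value of x in Z_n, so that rdiv(x, d) = s(x) div d mod n. Adding
  residues adds their signed values up to a wrap-around term: s(a) = s(a_0) + s(a_1) + corr * n.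
  With w_i = 1{a_i \<ge> n'} we have s(a_i) = (a_i^0 - w_i n^0) + (a_i^1 - w_i n^1) d, so the quotient
  parts of the sum add up exactly and the remainder parts add up to A. Hence s(a) div d exceeds
  s(a_0) div d + s(a_1) div d + corr n^1 by the carry A div d, minus the carries B already counted
  in the two summands; and since -2d < A < 2d, the carry is A div d = 1 - C.\<close>

definition signed_rep :: "int \<Rightarrow> int \<Rightarrow> int" where
  "signed_rep n x = x mod n - ind (x mod n \<ge> (n + 1) div 2) * n"

lemma rdiv_eq_signed_rep_div: "rdiv n x d = (signed_rep n x div d) mod n"
  by (simp add: rdiv_def signed_rep_def)

lemma signed_rep_eq:
  fixes n x :: int
  assumes "0 \<le> x" "x < n"
  shows "signed_rep n x = x - ind (x \<ge> (n + 1) div 2) * n"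
  using assms by (simp add: signed_rep_def)

lemma mod_add_eq_cases:
  fixes n a0 a1 :: int
  assumes "0 \<le> a0" "a0 < n" "0 \<le> a1" "a1 < n"
  shows "(a0 + a1) mod n = a0 + a1 \<or> (a0 + a1) mod n = a0 + a1 - n"
proof (cases "a0 + a1 < n")
  case True
  then show ?thesis using assms by simp
next
  case False
  then have "(a0 + a1 - n) mod n = a0 + a1 - n" using assms by (intro mod_pos_pos_trivial) auto
  then show ?thesis by (simp add: minus_mod_self2)
qed

lemma signed_rep_add:
  fixes n a0 a1 au :: int
  assumes "0 \<le> a0" "a0 < n" "0 \<le> a1" "a1 < n" and au: "au = (a0 + a1) mod n"
  defines "h \<equiv> (n + 1) div 2"
  shows "signed_rep n au = signed_rep n a0 + signed_rep n a1
           + (if au \<ge> h \<and> a0 < h \<and> a1 < h then -1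
              else if au < h \<and> a0 \<ge> h \<and> a1 \<ge> h then 1 else 0) * n"
proof -
  have "0 \<le> au" "au < n" using au assms by simp_all
  then have "signed_rep n au = au - ind (au \<ge> h) * n" unfolding h_def by (rule signed_rep_eq)
  moreover have "n \<le> 2 * h" "2 * h \<le> n + 1" unfolding h_def by auto
  ultimately show ?thesis
    using mod_add_eq_cases[OF assms(1-4)] \<open>0 \<le> au\<close> \<open>au < n\<close> assms(1-4)
    unfolding au[symmetric] signed_rep_eq[OF assms(1,2)] signed_rep_eq[OF assms(3,4)] h_def[symmetric]
    by (simp add: ind_def) linarith
qed

lemma diff_mult_div_mod_split:
  fixes x w n d :: int
  shows "x - w * n = (x mod d - w * (n mod d)) + (x div d - w * (n div d)) * d"
proof -
  have "x - w * n = (x div d * d + x mod d) - w * (n div d * d + n mod d)"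
    by simp
  also have "\<dots> = (x mod d - w * (n mod d)) + (x div d - w * (n div d)) * d"
    by algebra
  finally show ?thesis .
qed

lemma div_add_carry:
  fixes x0 x1 r0 r1 q0 q1 c n d :: int
  assumes "d \<noteq> 0" and x0: "x0 = r0 + q0 * d" and x1: "x1 = r1 + q1 * d"
  shows "(x0 + x1 + c * n) div d
    = x0 div d + x1 div d + c * (n div d) + (r0 + r1 + c * (n mod d)) div d - (r0 div d + r1 div d)"
proof -
  have "x0 + x1 + c * n = (r0 + r1 + c * (n mod d)) + (q0 + q1 + c * (n div d)) * d"
    unfolding x0 x1 using diff_mult_div_mod_split[of 0 "- c" n d] by (simp add: algebra_simps)
  then have "(x0 + x1 + c * n) div d = q0 + q1 + c * (n div d) + (r0 + r1 + c * (n mod d)) div d"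
    using \<open>d \<noteq> 0\<close> by simp
  moreover have "x0 div d = q0 + r0 div d" "x1 div d = q1 + r1 div d"
    unfolding x0 x1 using \<open>d \<noteq> 0\<close> by simp_all
  ultimately show ?thesis by simp
qed

lemma div_eq_one_minus_thresholds:
  fixes A d :: int
  assumes "0 < d" "-2 * d < A" "A < 2 * d"
  shows "A div d = 1 - (ind (A < d) + ind (A < 0) + ind (A < - d))"
proof -
  have div_eq: "A div d = q" if "d * q \<le> A" "A < d * q + d" for q
    using that by (intro int_div_pos_eq[of A d q "A - d * q"]) auto
  consider "d \<le> A" | "0 \<le> A" "A < d" | "- d \<le> A" "A < 0" | "A < - d" by linarith
  then show ?thesis
  proof cases
    case 1
    then show ?thesis using assms div_eq[of 1] by (simp add: ind_def)
  next
    case 2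
    then show ?thesis using div_eq[of 0] by (simp add: ind_def)
  next
    case 3
    then show ?thesis using assms div_eq[of "-1"] by (simp add: ind_def)
  next
    case 4
    then show ?thesis using assms div_eq[of "-2"] by (simp add: ind_def)
  qed
qed

lemma remainder_combination_bounds:
  fixes r0 r1 m k d :: int
  assumes "0 \<le> r0" "r0 < d" "0 \<le> r1" "r1 < d" "0 \<le> m" "m < d" "0 \<le> k" "k \<le> 2"
  shows "- 2 * d < r0 + r1 - k * m" "r0 + r1 - k * m < 2 * d"
proof -
  have "k * m \<le> 2 * m" using assms by (intro mult_right_mono) auto
  moreover have "0 \<le> k * m" using assms by simp
  ultimately show "- 2 * d < r0 + r1 - k * m" "r0 + r1 - k * m < 2 * d" using assms by linarith+
qed

theorem theorem4p1:
  fixes n d au a0 a1 :: int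
  assumes "n \<ge> 2" and "0 < d" and "d < n"
    and "0 \<le> au" and "au < n"
    and "0 \<le> a0" and "a0 < n"
    and "0 \<le> a1" and "a1 < n"
    and "(a0 + a1) mod n = au"
  shows "let n1 = n div d; n0 = n mod d;
             a01 = a0 div d; a00 = a0 mod d;
             a11 = a1 div d; a10 = a1 mod d;
             n' = (n + 1) div 2;
             corr = (if au \<ge> n' \<and> a0 < n' \<and> a1 < n' then -1
                     else if au < n' \<and> a0 \<ge> n' \<and> a1 \<ge> n' then 1 else 0);
             A = a00 + a10 - (ind (a0 \<ge> n') + ind (a1 \<ge> n') - corr) * n0;
             B = (a00 - ind (a0 \<ge> n') * n0) div d + (a10 - ind (a1 \<ge> n') * n0) div d;
             C = ind (A < d) + ind (A < 0) + ind (A < - d)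
         in (rdiv n a0 d + rdiv n a1 d + (corr * n1 + 1 - C - B)) mod n = rdiv n au d"
proof -
  define h where "h = (n + 1) div 2"
  define w0 where "w0 = ind (a0 \<ge> h)"
  define w1 where "w1 = ind (a1 \<ge> h)"
  define corr where "corr = (if au \<ge> h \<and> a0 < h \<and> a1 < h then -1
    else if au < h \<and> a0 \<ge> h \<and> a1 \<ge> h then 1 else (0::int))"
  define A where "A = a0 mod d + a1 mod d - (w0 + w1 - corr) * (n mod d)"
  define B where "B = (a0 mod d - w0 * (n mod d)) div d + (a1 mod d - w1 * (n mod d)) div d"
  define C where "C = ind (A < d) + ind (A < 0) + ind (A < - d)"
  have s0: "signed_rep n a0 = (a0 mod d - w0 * (n mod d)) + (a0 div d - w0 * (n div d)) * d"
    using assms by (simp add: signed_rep_eq w0_def h_def flip: diff_mult_div_mod_split)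
  have s1: "signed_rep n a1 = (a1 mod d - w1 * (n mod d)) + (a1 div d - w1 * (n div d)) * d"
    using assms by (simp add: signed_rep_eq w1_def h_def flip: diff_mult_div_mod_split)
  have "signed_rep n au = signed_rep n a0 + signed_rep n a1 + corr * n"
    using signed_rep_add[of a0 n a1 au] assms by (simp add: corr_def h_def)
  then have "signed_rep n au div d
      = signed_rep n a0 div d + signed_rep n a1 div d + corr * (n div d) + A div d - B"
    using div_add_carry[OF _ s0 s1, of corr n] \<open>0 < d\<close> by (simp add: A_def B_def algebra_simps)
  moreover have "A div d = 1 - C"
    unfolding C_def A_def using assms
    by (intro div_eq_one_minus_thresholds remainder_combination_bounds)
      (auto simp: w0_def w1_def corr_def ind_def)
  ultimately have "signed_rep n au div d
      = signed_rep n a0 div d + signed_rep n a1 div d + (corr * (n div d) + 1 - C - B)"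
    by simp
  then have "(rdiv n a0 d + rdiv n a1 d + (corr * (n div d) + 1 - C - B)) mod n = rdiv n au d"
    unfolding rdiv_eq_signed_rep_div by (metis mod_add_eq mod_add_left_eq)
  then show ?thesis
    unfolding Let_def C_def A_def B_def corr_def w0_def w1_def h_def .
qed

end
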